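(* Let $m\in\mathbb N$ and $k_1\ge k_2\ge\dots\ge k_m\ge1$ be integers. Then $$\sum_{j_2=0}^{k_2}\cdots\sum_{j_m=0}^{k_m}A_{j_2:j_m}=\operatorname{card}\Pi_{k_1,\dots,k_m},$$ where $A_{j_2:j_m}=\prod_{l=2}^m\binom{k_l}{j_l}\cdot\frac{k_1!\,(k_1+j_2)!\cdots(k_1+\sum_{i=2}^{m-1}j_i)!}{(k_1+j_2-k_2)!\,(k_1+j_2+j_3-k_3)!\cdots(k_1+\sum_{i=2}^mj_i-k_m)!}$ (for $m=1$ the left side is interpreted as $1$).
   Context: For $k=k_1+\dots+k_m$, let $[k]=\{1,\dots,k\}$ and $\pi=\{J_1,\dots,J_m\}$ with $J_i=\{j:k_1+\dots+k_{i-1}<j\le k_1+\dots+k_i\}$. $\Pi_{k_1,\dots,k_m}$ denotes the set of all partitions $\sigma$ of $[k]$ into disjoint nonempty blocks such that every block of $\sigma$ meets each $J_i$ in at most one element. *)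

theory Defs
  imports Complex_Main "HOL-Library.Disjoint_Sets"
begin

definition Jblock :: "(nat \<Rightarrow> nat) \<Rightarrow> nat \<Rightarrow> nat set" where
  "Jblock k i = {j. (\<Sum>l=1..<i. k l) < j \<and> j \<le> (\<Sum>l=1..i. k l)}"

definition PiK :: "nat \<Rightarrow> (nat \<Rightarrow> nat) \<Rightarrow> nat set set set" where
  "PiK m k = {\<sigma>. partition_on {1..(\<Sum>i=1..m. k i)} \<sigma> \<and>
                 (\<forall>B\<in>\<sigma>. \<forall>i\<in>{1..m}. card (B \<inter> Jblock k i) \<le> 1)}"

definition Acoef :: "nat \<Rightarrow> (nat \<Rightarrow> nat) \<Rightarrow> (nat \<Rightarrow> nat) \<Rightarrow> real" where
  "Acoef m k j = (\<Prod>l=2..m. real (k l choose j l) *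
      fact (k 1 + (\<Sum>i=2..<l. j i)) / fact (k 1 + (\<Sum>i=2..l. j i) - k l))"

end

theory Submission
  imports Defs "HOL-Library.FuncSet"
begin

text \<open>Write A = [k_1 + ... + k_m] and B = J_(m+1). Restricting a partition
tau in Pi_(k_1,...,k_(m+1)) to A gives some sigma in Pi_(k_1,...,k_m), and tau is recovered from
sigma by choosing the set S of points of B that form singleton blocks and an injection of B - S into
the blocks of sigma. Hence for every weight h on block numbers
  sum_tau h |tau| = sum_sigma sum_t (k_(m+1) choose t) * ff(|sigma|, k_(m+1) - t) * h (|sigma| + t),
with ff the falling factorial. Iterating, sum_tau h |tau| = sum_j A_j * h (k_1 + j_2 + ... + j_m): when
|sigma| = k_1 + j_2 + ... + j_m and t = j_(m+1), the binomial and the falling factorial are the new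
factors of A. The theorem is the case h = 1.\<close>

definition falling_fact :: "nat \<Rightarrow> nat \<Rightarrow> nat" where
  "falling_fact n s = (\<Prod>i = 0..<s. n - i)"

lemma fact_eq_fact_diff_mult_falling_fact:
  assumes "s \<le> n"
  shows "(fact n :: 'a::{comm_semiring_1, semiring_char_0}) = fact (n - s) * of_nat (falling_fact n s)"
  using assms
proof (induction s)
  case 0
  then show ?case by (simp add: falling_fact_def)
next
  case (Suc s)
  have "n - s = Suc (n - Suc s)" using Suc.prems by simp
  then have "(fact (n - s) :: 'a) = fact (n - Suc s) * of_nat (n - s)"
    by (simp add: mult.commute)
  moreover have "falling_fact n (Suc s) = falling_fact n s * (n - s)"
    by (simp add: falling_fact_def)
  ultimately show ?case using Suc by (simp add: mult_ac)
qed

lemma falling_fact_0_left: "falling_fact 0 s = (if s = 0 then 1 else 0)"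
  by (cases s) (simp_all add: falling_fact_def)

lemma card_inj_PiE:
  assumes "finite A" "finite C"
  shows "card {g \<in> A \<rightarrow>\<^sub>E C. inj_on g A} = falling_fact (card C) (card A)"
  using card_inj_on_subset_funcset[OF assms order_refl] by (simp add: falling_fact_def)

lemma sum_Pow_card:
  fixes F :: "nat \<Rightarrow> 'a::comm_semiring_1"
  assumes "finite B"
  shows "(\<Sum>S\<in>Pow B. F (card S)) = (\<Sum>s=0..card B. of_nat (card B choose s) * F s)"
proof -
  have Pow_eq: "Pow B = (\<Union>s\<in>{0..card B}. {S. S \<subseteq> B \<and> card S = s})"
    using card_mono[OF assms] by auto
  have "(\<Sum>S\<in>Pow B. F (card S)) = (\<Sum>s=0..card B. \<Sum>S | S \<subseteq> B \<and> card S = s. F (card S))"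
    unfolding Pow_eq by (rule sum.UNION_disjoint) (use assms in \<open>auto intro: finite_subset\<close>)
  also have "\<dots> = (\<Sum>s=0..card B. of_nat (card B choose s) * F s)"
    by (rule sum.cong) (simp_all add: n_subsets[OF assms])
  finally show ?thesis .
qed

lemma sum_PiE_insert:
  assumes "i \<notin> I"
  shows "(\<Sum>f\<in>Pi\<^sub>E (insert i I) S. F f) = (\<Sum>f\<in>Pi\<^sub>E I S. \<Sum>t\<in>S i. F (f(i := t)))"
proof -
  have "(\<Sum>f\<in>Pi\<^sub>E (insert i I) S. F f) = (\<Sum>(t, f)\<in>S i \<times> Pi\<^sub>E I S. F (f(i := t)))"
    unfolding PiE_insert_eq by (rule sum.reindex_cong[OF inj_combinator[OF assms] refl]) auto
  also have "\<dots> = (\<Sum>t\<in>S i. \<Sum>f\<in>Pi\<^sub>E I S. F (f(i := t)))"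
    by (rule sum.cartesian_product[symmetric])
  finally show ?thesis by (rule trans[OF _ sum.swap])
qed

definition block_of :: "'a set set \<Rightarrow> 'a \<Rightarrow> 'a set" where
  "block_of P x = (THE X. X \<in> P \<and> x \<in> X)"

lemma partition_on_block_eq:
  assumes "partition_on A P" "X \<in> P" "Y \<in> P" "x \<in> X" "x \<in> Y"
  shows "X = Y"
  using assms unfolding partition_on_def disjoint_def by blast

lemma block_of:
  assumes "partition_on A P" "x \<in> A"
  shows block_of_mem: "block_of P x \<in> P" and mem_block_of: "x \<in> block_of P x"
proof -
  have "\<exists>!X. X \<in> P \<and> x \<in> X"
    using assms partition_on_block_eq[OF assms(1)] unfolding partition_on_def by blast
  then have "block_of P x \<in> P \<and> x \<in> block_of P x"
    unfolding block_of_def by (rule theI')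
  then show "block_of P x \<in> P" "x \<in> block_of P x" by auto
qed

lemma block_of_eq:
  assumes "partition_on A P" "X \<in> P" "x \<in> X"
  shows "block_of P x = X"
proof -
  have "x \<in> A" using assms unfolding partition_on_def by blast
  then show ?thesis using block_of[OF assms(1)] partition_on_block_eq[OF assms(1)] assms by blast
qed

definition extensions :: "'a set \<Rightarrow> 'a set \<Rightarrow> 'a set set \<Rightarrow> 'a set set set" where
  "extensions A B \<sigma> =
     {\<tau>. partition_on (A \<union> B) \<tau> \<and> (\<forall>Z\<in>\<tau>. card (Z \<inter> B) \<le> 1) \<and> (\<inter>) A ` \<tau> - {{}} = \<sigma>}"

definition extension_data :: "'a set \<Rightarrow> 'a set set \<Rightarrow> ('a set \<times> ('a \<Rightarrow> 'a set)) set" where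
  "extension_data B \<sigma> = (SIGMA S:Pow B. {g \<in> (B - S) \<rightarrow>\<^sub>E \<sigma>. inj_on g (B - S)})"

definition extend :: "'a set \<Rightarrow> 'a set set \<Rightarrow> 'a set \<Rightarrow> ('a \<Rightarrow> 'a set) \<Rightarrow> 'a set set" where
  "extend B \<sigma> S g = (\<lambda>X. X \<union> {y \<in> B - S. g y = X}) ` \<sigma> \<union> (\<lambda>y. {y}) ` S"

definition unextend :: "'a set \<Rightarrow> 'a set \<Rightarrow> 'a set set \<Rightarrow> 'a set \<times> ('a \<Rightarrow> 'a set)" where
  "unextend A B \<tau> =
     ({y \<in> B. {y} \<in> \<tau>}, restrict (\<lambda>y. A \<inter> block_of \<tau> y) (B - {y \<in> B. {y} \<in> \<tau>}))"

context
  fixes A B :: "'a set" and \<sigma> :: "'a set set"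
  assumes finite_A: "finite A" and finite_B: "finite B" and disjoint_AB: "A \<inter> B = {}"
    and partition_\<sigma>: "partition_on A \<sigma>"
begin

lemma block_subset: "X \<in> \<sigma> \<Longrightarrow> X \<subseteq> A"
  using partition_\<sigma> unfolding partition_on_def by blast

lemma block_nonempty: "X \<in> \<sigma> \<Longrightarrow> X \<noteq> {}"
  using partition_\<sigma> unfolding partition_on_def by blast

lemma trace_attached_block: "X \<in> \<sigma> \<Longrightarrow> A \<inter> (X \<union> {y \<in> B - S. g y = X}) = X"
  using block_subset disjoint_AB by blast

lemma attached_block_ne_singleton:
  assumes "X \<in> \<sigma>" "z \<in> B"
  shows "X \<union> {y \<in> B - S. g y = X} \<noteq> {z}"
proof
  assume eq: "X \<union> {y \<in> B - S. g y = X} = {z}"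
  obtain x where x: "x \<in> X" using block_nonempty[OF assms(1)] by blast
  then have "x = z" using eq by (metis UnI1 singletonD)
  then show False using x block_subset[OF assms(1)] assms(2) disjoint_AB by blast
qed

lemma partition_on_extend:
  assumes "S \<subseteq> B" "g \<in> (B - S) \<rightarrow>\<^sub>E \<sigma>"
  shows "partition_on (A \<union> B) (extend B \<sigma> S g)"
proof (rule partition_onI)
  show "\<Union>(extend B \<sigma> S g) = A \<union> B"
  proof (intro equalityI subsetI)
    fix x assume "x \<in> \<Union>(extend B \<sigma> S g)"
    then show "x \<in> A \<union> B"
      using block_subset assms(1) unfolding extend_def by blast
  next
    fix x assume x: "x \<in> A \<union> B"
    consider "x \<in> A" | "x \<in> S" | "x \<in> B - S" using x by blast
    then show "x \<in> \<Union>(extend B \<sigma> S g)"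
    proof cases
      case 1
      then obtain X where "X \<in> \<sigma>" "x \<in> X" using partition_onD1[OF partition_\<sigma>] by blast
      then show ?thesis unfolding extend_def by blast
    next
      case 2
      then show ?thesis unfolding extend_def by blast
    next
      case 3
      then have "g x \<in> \<sigma>" using assms(2) by blast
      with 3 show ?thesis unfolding extend_def by blast
    qed
  qed
  let ?attach = "\<lambda>X. X \<union> {y \<in> B - S. g y = X}"
  have attach_disjnt: "disjnt (?attach X) (?attach Y)" if "X \<in> \<sigma>" "Y \<in> \<sigma>" "X \<noteq> Y" for X Y
  proof -
    have "X \<inter> Y = {}"
      using partition_onD2[OF partition_\<sigma>] that unfolding disjoint_def by blast
    then show ?thesis
      using block_subset[OF that(1)] block_subset[OF that(2)] disjoint_AB that(3)
      unfolding disjnt_def by blast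
  qed
  have attach_disjnt_singleton: "disjnt (?attach X) {y}" if "X \<in> \<sigma>" "y \<in> S" for X y
    using block_subset[OF that(1)] disjoint_AB assms(1) that(2) unfolding disjnt_def by blast
  have extend_cases: "(\<exists>X\<in>\<sigma>. P = ?attach X) \<or> (\<exists>y\<in>S. P = {y})" if "P \<in> extend B \<sigma> S g" for P
    using that unfolding extend_def by blast
  show "disjnt P Q" if "P \<in> extend B \<sigma> S g" "Q \<in> extend B \<sigma> S g" "P \<noteq> Q" for P Q
    using extend_cases[OF that(1)] extend_cases[OF that(2)]
  proof (elim disjE bexE)
    fix X Y assume "X \<in> \<sigma>" "P = ?attach X" "Y \<in> \<sigma>" "Q = ?attach Y"
    with that(3) have "X \<noteq> Y" by blast
    then show ?thesis
      using attach_disjnt \<open>X \<in> \<sigma>\<close> \<open>Y \<in> \<sigma>\<close> \<open>P = ?attach X\<close> \<open>Q = ?attach Y\<close>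
      by simp
  next
    fix X z assume "X \<in> \<sigma>" "P = ?attach X" "z \<in> S" "Q = {z}"
    then show ?thesis using attach_disjnt_singleton by simp
  next
    fix y Y assume "y \<in> S" "P = {y}" "Y \<in> \<sigma>" "Q = ?attach Y"
    then show ?thesis using attach_disjnt_singleton[THEN disjnt_sym] by simp
  next
    fix y z assume "y \<in> S" "P = {y}" "z \<in> S" "Q = {z}"
    then show ?thesis using that(3) by simp
  qed
  show "{} \<notin> extend B \<sigma> S g"
    using block_nonempty unfolding extend_def by blast
qed

lemma extend_in_extensions:
  assumes "(S, g) \<in> extension_data B \<sigma>"
  shows "extend B \<sigma> S g \<in> extensions A B \<sigma>"
proof -
  have S: "S \<subseteq> B" and g: "g \<in> (B - S) \<rightarrow>\<^sub>E \<sigma>" "inj_on g (B - S)"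
    using assms unfolding extension_data_def by auto
  have card_inter_B: "card (Z \<inter> B) \<le> 1" if "Z \<in> extend B \<sigma> S g" for Z
  proof -
    from that consider X where "X \<in> \<sigma>" "Z = X \<union> {y \<in> B - S. g y = X}" | y where "Z = {y}"
      unfolding extend_def by blast
    then show ?thesis
    proof cases
      case 1
      then have "Z \<inter> B = {y \<in> B - S. g y = X}"
        using block_subset[OF 1(1)] disjoint_AB by blast
      moreover have "card {y \<in> B - S. g y = X} \<le> Suc 0"
        using finite_B by (subst card_le_Suc0_iff_eq) (auto dest: inj_onD[OF g(2)])
      ultimately show ?thesis by simp
    next
      case 2
      then show ?thesis using card_mono[of "{y}" "Z \<inter> B"] by auto
    qed
  qed
  have trace: "(\<inter>) A ` extend B \<sigma> S g - {{}} = \<sigma>"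
  proof -
    have "(\<inter>) A ` extend B \<sigma> S g = \<sigma> \<union> (\<lambda>y. A \<inter> {y}) ` S"
      unfolding extend_def image_Un image_image using trace_attached_block by simp
    moreover have "{} \<notin> \<sigma>" using partition_onD3[OF partition_\<sigma>] .
    ultimately show ?thesis using S disjoint_AB by auto
  qed
  show ?thesis
    unfolding extensions_def using partition_on_extend[OF S g(1)] card_inter_B trace by simp
qed

lemma card_extend:
  assumes "(S, g) \<in> extension_data B \<sigma>"
  shows "card (extend B \<sigma> S g) = card \<sigma> + card S"
proof -
  have S: "S \<subseteq> B" using assms unfolding extension_data_def by auto
  let ?attach = "\<lambda>X. X \<union> {y \<in> B - S. g y = X}"
  have "inj_on ?attach \<sigma>"
    by (rule inj_on_inverseI[where g = "(\<inter>) A"]) (rule trace_attached_block)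
  then have "card (?attach ` \<sigma>) = card \<sigma>" by (rule card_image)
  moreover have "card ((\<lambda>y. {y}) ` S) = card S" by (rule card_image) simp
  moreover have "?attach ` \<sigma> \<inter> (\<lambda>y. {y}) ` S = {}"
  proof (rule equals0I)
    fix W assume "W \<in> ?attach ` \<sigma> \<inter> (\<lambda>y. {y}) ` S"
    then obtain X y where "X \<in> \<sigma>" "y \<in> S" "?attach X = {y}" by blast
    then show False using attached_block_ne_singleton S by (meson subsetD)
  qed
  moreover have "finite \<sigma>" "finite S"
    using finite_elements[OF finite_A partition_\<sigma>] finite_subset[OF S finite_B] .
  ultimately show ?thesis
    unfolding extend_def by (simp add: card_Un_disjoint)
qed

lemma unextend_extend:
  assumes "(S, g) \<in> extension_data B \<sigma>"
  shows "unextend A B (extend B \<sigma> S g) = (S, g)"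
proof -
  have S: "S \<subseteq> B" and g: "g \<in> (B - S) \<rightarrow>\<^sub>E \<sigma>"
    using assms unfolding extension_data_def by auto
  define \<tau> where "\<tau> = extend B \<sigma> S g"
  have partition: "partition_on (A \<union> B) \<tau>"
    unfolding \<tau>_def by (rule partition_on_extend[OF S g])
  have singletons: "{y \<in> B. {y} \<in> \<tau>} = S"
  proof (intro equalityI subsetI)
    fix y assume "y \<in> {y \<in> B. {y} \<in> \<tau>}"
    then have y: "y \<in> B" "{y} \<in> \<tau>" by auto
    then consider X where "X \<in> \<sigma>" "{y} = X \<union> {z \<in> B - S. g z = X}" | z where "z \<in> S" "{y} = {z}"
      unfolding \<tau>_def extend_def by blast
    then show "y \<in> S"
    proof cases
      case 1
      then show ?thesis using attached_block_ne_singleton[OF 1(1) y(1), of S g] by simp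
    qed simp
  next
    fix y assume "y \<in> S"
    then show "y \<in> {y \<in> B. {y} \<in> \<tau>}" using S unfolding \<tau>_def extend_def by blast
  qed
  have "restrict (\<lambda>y. A \<inter> block_of \<tau> y) (B - S) y = g y" for y
  proof (cases "y \<in> B - S")
    case True
    then have "g y \<in> \<sigma>" using g by blast
    then have "block_of \<tau> y = g y \<union> {z \<in> B - S. g z = g y}"
      using True by (intro block_of_eq[OF partition]) (auto simp: \<tau>_def extend_def)
    then show ?thesis using trace_attached_block[OF \<open>g y \<in> \<sigma>\<close>] True by simp
  next
    case False
    then show ?thesis using g by auto
  qed
  then show ?thesis
    unfolding unextend_def \<tau>_def[symmetric] singletons by auto
qed

context
  fixes \<tau> assumes \<tau>: "\<tau> \<in> extensions A B \<sigma>"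
begin

lemma extension_partition_on: "partition_on (A \<union> B) \<tau>"
  using \<tau> unfolding extensions_def by blast

lemma extension_card_inter_B: "Z \<in> \<tau> \<Longrightarrow> card (Z \<inter> B) \<le> 1"
  using \<tau> unfolding extensions_def by blast

lemma extension_trace: "(\<inter>) A ` \<tau> - {{}} = \<sigma>"
  using \<tau> unfolding extensions_def by blast

lemma extension_trace_mem: "Z \<in> \<tau> \<Longrightarrow> A \<inter> Z \<noteq> {} \<Longrightarrow> A \<inter> Z \<in> \<sigma>"
  using extension_trace by blast

lemma extension_block_inter_B_unique:
  assumes "Z \<in> \<tau>" "y \<in> Z \<inter> B" "z \<in> Z \<inter> B"
  shows "y = z"
proof -
  have "card (Z \<inter> B) \<le> Suc 0" using extension_card_inter_B[OF assms(1)] by simp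
  moreover have "finite (Z \<inter> B)" using finite_B by simp
  ultimately show ?thesis using assms(2,3) by (metis card_le_Suc0_iff_eq)
qed

lemma extension_block_singleton:
  assumes Z: "Z \<in> \<tau>" and "A \<inter> Z = {}"
  obtains y where "y \<in> B" "Z = {y}"
proof -
  have ZB: "Z \<subseteq> B" using partition_onD1[OF extension_partition_on] Z assms(2) by blast
  obtain y where y: "y \<in> Z" using partition_onD3[OF extension_partition_on] Z by (metis all_not_in_conv)
  have "z = y" if "z \<in> Z" for z
    using extension_block_inter_B_unique[OF Z, of z y] that y ZB by blast
  then have "Z = {y}" using y by blast
  then show ?thesis using that y ZB by blast
qed

abbreviation singletons :: "'a set" where
  "singletons \<equiv> {y \<in> B. {y} \<in> \<tau>}"

lemma extension_block_of_meets_A: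
  assumes y: "y \<in> B - singletons"
  shows "A \<inter> block_of \<tau> y \<noteq> {}"
proof
  have block: "block_of \<tau> y \<in> \<tau>" "y \<in> block_of \<tau> y"
    using block_of[OF extension_partition_on] y by auto
  assume "A \<inter> block_of \<tau> y = {}"
  then obtain z where "block_of \<tau> y = {z}"
    using extension_block_singleton[OF block(1)] by blast
  then have "block_of \<tau> y = {y}" using block(2) by simp
  then show False using block(1) y by simp
qed

lemma unextend_in_extension_data: "unextend A B \<tau> \<in> extension_data B \<sigma>"
proof -
  let ?g = "\<lambda>y. A \<inter> block_of \<tau> y"
  have "?g y \<in> \<sigma>" if "y \<in> B - singletons" for y
    using extension_trace_mem[OF block_of_mem[OF extension_partition_on]
        extension_block_of_meets_A[OF that]] that
    by blast
  moreover have "inj_on ?g (B - singletons)"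
  proof
    fix y z assume y: "y \<in> B - singletons" and z: "z \<in> B - singletons" and eq: "?g y = ?g z"
    have blocks: "block_of \<tau> y \<in> \<tau>" "y \<in> block_of \<tau> y" "block_of \<tau> z \<in> \<tau>" "z \<in> block_of \<tau> z"
      using block_of[OF extension_partition_on] y z by auto
    obtain a where "a \<in> ?g y" using extension_block_of_meets_A[OF y] by blast
    then have "a \<in> block_of \<tau> y" "a \<in> block_of \<tau> z" using eq by auto
    then have "block_of \<tau> y = block_of \<tau> z"
      using partition_on_block_eq[OF extension_partition_on blocks(1,3)] by blast
    then show "y = z"
      using extension_block_inter_B_unique[OF blocks(1), of y z] blocks(2,4) y z by simp
  qed
  ultimately show ?thesis
    unfolding unextend_def extension_data_def by (simp add: restrict_PiE_iff)
qed

lemma extension_block_eq_attached: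
  assumes Z: "Z \<in> \<tau>" and meets: "A \<inter> Z \<noteq> {}"
  shows "Z = (A \<inter> Z) \<union> {y \<in> B - singletons. A \<inter> block_of \<tau> y = A \<inter> Z}"
proof (intro equalityI subsetI)
  fix y assume y: "y \<in> Z"
  show "y \<in> (A \<inter> Z) \<union> {y \<in> B - singletons. A \<inter> block_of \<tau> y = A \<inter> Z}"
  proof (cases "y \<in> A")
    case False
    have "y \<in> B" using partition_onD1[OF extension_partition_on] Z y False by blast
    moreover have "{y} \<notin> \<tau>"
    proof
      assume "{y} \<in> \<tau>"
      then have "Z = {y}" using partition_on_block_eq[OF extension_partition_on Z _ y] by simp
      then show False using meets False by blast
    qed
    ultimately show ?thesis using block_of_eq[OF extension_partition_on Z y] by simp
  qed (use y in simp)
next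
  fix y assume "y \<in> (A \<inter> Z) \<union> {y \<in> B - singletons. A \<inter> block_of \<tau> y = A \<inter> Z}"
  then consider "y \<in> Z" | "y \<in> B" "A \<inter> block_of \<tau> y = A \<inter> Z" by blast
  then show "y \<in> Z"
  proof cases
    case 2
    have block: "block_of \<tau> y \<in> \<tau>" "y \<in> block_of \<tau> y"
      using block_of[OF extension_partition_on] 2(1) by auto
    obtain a where "a \<in> A \<inter> Z" using meets by blast
    then have "a \<in> block_of \<tau> y" "a \<in> Z" using 2(2) by auto
    then have "block_of \<tau> y = Z" using partition_on_block_eq[OF extension_partition_on block(1) Z] by blast
    then show ?thesis using block(2) by simp
  qed
qed

lemma extend_unextend_eq:
  "case_prod (extend B \<sigma>) (unextend A B \<tau>) =
     (\<lambda>X. X \<union> {y \<in> B - singletons. A \<inter> block_of \<tau> y = X}) ` \<sigma> \<union> (\<lambda>y. {y}) ` singletons"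
  unfolding unextend_def extend_def by (simp add: restrict_def cong: conj_cong)

lemma extend_unextend: "case_prod (extend B \<sigma>) (unextend A B \<tau>) = \<tau>"
  unfolding extend_unextend_eq
proof (intro equalityI subsetI)
  fix W assume "W \<in> (\<lambda>X. X \<union> {y \<in> B - singletons. A \<inter> block_of \<tau> y = X}) ` \<sigma> \<union> (\<lambda>y. {y}) ` singletons"
  then consider X where "X \<in> \<sigma>" "W = X \<union> {y \<in> B - singletons. A \<inter> block_of \<tau> y = X}"
    | y where "y \<in> singletons" "W = {y}"
    by blast
  then show "W \<in> \<tau>"
  proof cases
    case 1
    obtain Z where Z: "Z \<in> \<tau>" "X = A \<inter> Z" using extension_trace 1(1) by blast
    then have "A \<inter> Z \<noteq> {}" using block_nonempty[OF 1(1)] by simp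
    then have "Z = W" using extension_block_eq_attached[OF Z(1)] 1(2) Z(2) by simp
    then show ?thesis using Z(1) by simp
  qed simp
next
  fix Z assume Z: "Z \<in> \<tau>"
  show "Z \<in> (\<lambda>X. X \<union> {y \<in> B - singletons. A \<inter> block_of \<tau> y = X}) ` \<sigma> \<union> (\<lambda>y. {y}) ` singletons"
  proof (cases "A \<inter> Z = {}")
    case True
    then obtain y where "y \<in> B" "Z = {y}" using extension_block_singleton[OF Z] by blast
    then show ?thesis using Z by blast
  next
    case False
    then have "A \<inter> Z \<in> \<sigma>" using extension_trace_mem[OF Z] by blast
    then show ?thesis using extension_block_eq_attached[OF Z False] by blast
  qed
qed

end

lemma bij_betw_extend:
  "bij_betw (case_prod (extend B \<sigma>)) (extension_data B \<sigma>) (extensions A B \<sigma>)"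
  by (rule bij_betw_byWitness[where f' = "unextend A B"])
    (auto simp: unextend_extend extend_unextend extend_in_extensions unextend_in_extension_data)

lemma sum_extensions:
  fixes h :: "nat \<Rightarrow> 'b::comm_semiring_1"
  shows "(\<Sum>\<tau>\<in>extensions A B \<sigma>. h (card \<tau>)) =
    (\<Sum>t=0..card B.
       of_nat (card B choose t) * of_nat (falling_fact (card \<sigma>) (card B - t)) * h (card \<sigma> + t))"
proof -
  let ?injections = "\<lambda>S. {g \<in> (B - S) \<rightarrow>\<^sub>E \<sigma>. inj_on g (B - S)}"
  have finite_\<sigma>: "finite \<sigma>" by (rule finite_elements[OF finite_A partition_\<sigma>])
  have card_injections: "card (?injections S) = falling_fact (card \<sigma>) (card B - card S)"
    if "S \<subseteq> B" for S
    using card_inj_PiE[OF _ finite_\<sigma>, of "B - S"] finite_B that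
    by (simp add: card_Diff_subset finite_subset)
  have finite_injections: "finite (?injections S)" for S
    using finite_PiE[of "B - S" "\<lambda>_. \<sigma>"] finite_B finite_\<sigma> by simp
  have "(\<Sum>\<tau>\<in>extensions A B \<sigma>. h (card \<tau>)) =
      (\<Sum>(S, g)\<in>extension_data B \<sigma>. h (card (extend B \<sigma> S g)))"
    using sum.reindex_bij_betw[OF bij_betw_extend, of "\<lambda>\<tau>. h (card \<tau>)"]
    by (simp add: case_prod_unfold)
  also have "\<dots> = (\<Sum>(S, g)\<in>extension_data B \<sigma>. h (card \<sigma> + card S))"
    by (rule sum.cong) (auto simp: card_extend)
  also have "\<dots> = (\<Sum>S\<in>Pow B. \<Sum>g\<in>?injections S. h (card \<sigma> + card S))"
    unfolding extension_data_def
    by (rule sum.Sigma[symmetric]) (use finite_B finite_injections in auto)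
  also have "\<dots> =
      (\<Sum>S\<in>Pow B. of_nat (falling_fact (card \<sigma>) (card B - card S)) * h (card \<sigma> + card S))"
    by (rule sum.cong) (simp_all add: card_injections)
  also have "\<dots> = (\<Sum>t=0..card B.
      of_nat (card B choose t) * (of_nat (falling_fact (card \<sigma>) (card B - t)) * h (card \<sigma> + t)))"
    by (rule sum_Pow_card[OF finite_B])
  finally show ?thesis by (simp add: mult.assoc)
qed

end

lemma Jblock_Suc: "Jblock k (Suc m) = {(\<Sum>l=1..m. k l)<..(\<Sum>l=1..m. k l) + k (Suc m)}"
  unfolding Jblock_def atLeastLessThanSuc_atLeastAtMost by auto

lemma Jblock_subset:
  assumes "1 \<le> i" "i \<le> m"
  shows "Jblock k i \<subseteq> {1..(\<Sum>l=1..m. k l)}"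
proof
  fix j assume "j \<in> Jblock k i"
  then have j: "(\<Sum>l=1..<i. k l) < j" "j \<le> (\<Sum>l=1..i. k l)" unfolding Jblock_def by auto
  have "(\<Sum>l=1..i. k l) \<le> (\<Sum>l=1..m. k l)" by (rule sum_mono2) (use assms in auto)
  then show "j \<in> {1..(\<Sum>l=1..m. k l)}" using j by auto
qed

lemma finite_PiK: "finite (PiK m k)"
  unfolding PiK_def
  by (rule finite_subset[OF _ finitely_many_partition_on[of "{1..(\<Sum>i=1..m. k i)}"]]) auto

lemma PiK_0: "PiK 0 k = {{}}"
  unfolding PiK_def by (auto simp: partition_on_empty)

lemma PiK_Suc:
  fixes m :: nat and k :: "nat \<Rightarrow> nat"
  defines "A \<equiv> {1..(\<Sum>l=1..m. k l)}" and "B \<equiv> Jblock k (Suc m)"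
  shows "PiK (Suc m) k = (\<Union>\<sigma>\<in>PiK m k. extensions A B \<sigma>)"
proof (intro equalityI subsetI)
  have AB: "{1..(\<Sum>i=1..Suc m. k i)} = A \<union> B" unfolding A_def B_def Jblock_Suc by auto
  have J_A: "Jblock k i \<subseteq> A" if "i \<in> {1..m}" for i
    unfolding A_def using Jblock_subset that by auto
  fix \<tau> assume "\<tau> \<in> PiK (Suc m) k"
  then have partition_\<tau>: "partition_on (A \<union> B) \<tau>"
    and meets_J: "\<forall>Z\<in>\<tau>. \<forall>i\<in>{1..Suc m}. card (Z \<inter> Jblock k i) \<le> 1"
    unfolding PiK_def AB by auto
  define \<sigma> where "\<sigma> = (\<inter>) A ` \<tau> - {{}}"
  have "partition_on A \<sigma>"
    using partition_on_restrict[OF partition_\<tau>, of A] unfolding \<sigma>_def Int_absorb2[OF Un_upper1] .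
  moreover have "card (X \<inter> Jblock k i) \<le> 1" if X: "X \<in> \<sigma>" and i: "i \<in> {1..m}" for X i
  proof -
    obtain Z where Z: "Z \<in> \<tau>" "X = A \<inter> Z" using X unfolding \<sigma>_def by blast
    then have "X \<inter> Jblock k i = Z \<inter> Jblock k i" using J_A[OF i] by blast
    then show ?thesis using meets_J Z(1) i by simp
  qed
  ultimately have "\<sigma> \<in> PiK m k" unfolding PiK_def A_def by blast
  moreover have "\<tau> \<in> extensions A B \<sigma>"
    unfolding extensions_def B_def \<sigma>_def using partition_\<tau> meets_J B_def by auto
  ultimately show "\<tau> \<in> (\<Union>\<sigma>\<in>PiK m k. extensions A B \<sigma>)" by blast
next
  have AB: "{1..(\<Sum>i=1..Suc m. k i)} = A \<union> B" unfolding A_def B_def Jblock_Suc by auto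
  have J_A: "Jblock k i \<subseteq> A" if "i \<in> {1..m}" for i
    unfolding A_def using Jblock_subset that by auto
  fix \<tau> assume "\<tau> \<in> (\<Union>\<sigma>\<in>PiK m k. extensions A B \<sigma>)"
  then obtain \<sigma> where \<sigma>: "\<sigma> \<in> PiK m k" and \<tau>: "\<tau> \<in> extensions A B \<sigma>" by blast
  have partition_\<tau>: "partition_on (A \<union> B) \<tau>" and meets_B: "\<forall>Z\<in>\<tau>. card (Z \<inter> B) \<le> 1"
    and trace: "(\<inter>) A ` \<tau> - {{}} = \<sigma>"
    using \<tau> unfolding extensions_def by auto
  have "card (Z \<inter> Jblock k i) \<le> 1" if Z: "Z \<in> \<tau>" and i: "i \<in> {1..Suc m}" for Z i
  proof (cases "i = Suc m")
    case True
    then show ?thesis using meets_B Z unfolding B_def by simp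
  next
    case False
    then have i': "i \<in> {1..m}" using i by auto
    have eq: "Z \<inter> Jblock k i = (A \<inter> Z) \<inter> Jblock k i" using J_A[OF i'] by auto
    show ?thesis
    proof (cases "A \<inter> Z = {}")
      case False
      then have "A \<inter> Z \<in> \<sigma>" using trace Z by blast
      then show ?thesis unfolding eq using \<sigma> i' unfolding PiK_def by blast
    qed (simp add: eq)
  qed
  then show "\<tau> \<in> PiK (Suc m) k" unfolding PiK_def AB using partition_\<tau> by blast
qed

lemma sum_PiK_Suc:
  fixes h :: "nat \<Rightarrow> 'b::comm_semiring_1"
  shows "(\<Sum>\<tau>\<in>PiK (Suc m) k. h (card \<tau>)) =
    (\<Sum>\<sigma>\<in>PiK m k. \<Sum>t=0..k (Suc m).
       of_nat (k (Suc m) choose t) * of_nat (falling_fact (card \<sigma>) (k (Suc m) - t)) * h (card \<sigma> + t))"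
proof -
  define A where "A = {1..(\<Sum>l=1..m. k l)}"
  define B where "B = Jblock k (Suc m)"
  have finite_A: "finite A" and finite_B: "finite B" and disjoint_AB: "A \<inter> B = {}"
    unfolding A_def B_def Jblock_Suc by auto
  have card_B: "card B = k (Suc m)" unfolding B_def Jblock_Suc by simp
  have "(\<Sum>\<tau>\<in>PiK (Suc m) k. h (card \<tau>)) = (\<Sum>\<sigma>\<in>PiK m k. \<Sum>\<tau>\<in>extensions A B \<sigma>. h (card \<tau>))"
    unfolding PiK_Suc[of m k, folded A_def B_def]
  proof (rule sum.UNION_disjoint)
    show "finite (PiK m k)" by (rule finite_PiK)
    show "\<forall>\<sigma>\<in>PiK m k. finite (extensions A B \<sigma>)"
      unfolding extensions_def using finitely_many_partition_on[of "A \<union> B"] finite_A finite_B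
      by (auto elim: finite_subset[rotated])
    show "\<forall>\<sigma>\<in>PiK m k. \<forall>\<sigma>'\<in>PiK m k. \<sigma> \<noteq> \<sigma>' \<longrightarrow> extensions A B \<sigma> \<inter> extensions A B \<sigma>' = {}"
      unfolding extensions_def by blast
  qed
  also have "\<dots> = (\<Sum>\<sigma>\<in>PiK m k. \<Sum>t=0..k (Suc m).
       of_nat (k (Suc m) choose t) * of_nat (falling_fact (card \<sigma>) (k (Suc m) - t)) * h (card \<sigma> + t))"
  proof (rule sum.cong[OF refl])
    fix \<sigma> assume "\<sigma> \<in> PiK m k"
    then have "partition_on A \<sigma>" unfolding PiK_def A_def by blast
    from sum_extensions[OF finite_A finite_B disjoint_AB this, of h]
    show "(\<Sum>\<tau>\<in>extensions A B \<sigma>. h (card \<tau>)) = (\<Sum>t=0..k (Suc m).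
       of_nat (k (Suc m) choose t) * of_nat (falling_fact (card \<sigma>) (k (Suc m) - t)) * h (card \<sigma> + t))"
      unfolding card_B .
  qed
  finally show ?thesis .
qed

lemma sum_PiK_1:
  fixes h :: "nat \<Rightarrow> 'b::comm_semiring_1"
  shows "(\<Sum>\<tau>\<in>PiK 1 k. h (card \<tau>)) = h (k 1)"
proof -
  have "(\<Sum>\<tau>\<in>PiK (Suc 0) k. h (card \<tau>)) =
    (\<Sum>t=0..k 1. of_nat (k 1 choose t) * of_nat (falling_fact 0 (k 1 - t)) * h t)"
    using sum_PiK_Suc[where m = 0 and k = k and h = h] by (simp add: PiK_0)
  also have "\<dots> = (\<Sum>t=0..k 1. if t = k 1 then h (k 1) else 0)"
    by (rule sum.cong) (auto simp: falling_fact_0_left)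
  finally show ?thesis by simp
qed

lemma Acoef_Suc:
  assumes m: "1 \<le> m" and t: "t \<le> k (Suc m)" and le_k1: "k (Suc m) \<le> k 1"
  shows "Acoef (Suc m) k (j(Suc m := t)) =
    Acoef m k j * (of_nat (k (Suc m) choose t) *
      of_nat (falling_fact (k 1 + (\<Sum>i=2..m. j i)) (k (Suc m) - t)))"
proof -
  let ?j = "j(Suc m := t)"
  let ?T = "\<lambda>j l. real (k l choose j l) * fact (k 1 + (\<Sum>i=2..<l. j i)) / fact (k 1 + (\<Sum>i=2..l. j i) - k l)"
  define N where "N = k 1 + (\<Sum>i=2..m. j i)"
  have old_factors: "(\<Prod>l=2..m. ?T ?j l) = (\<Prod>l=2..m. ?T j l)"
    by (rule prod.cong) auto
  have sum_before: "(\<Sum>i=2..<Suc m. ?j i) = (\<Sum>i=2..m. j i)"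
    unfolding atLeastLessThanSuc_atLeastAtMost by (rule sum.cong) auto
  have sum_upto: "(\<Sum>i=2..Suc m. ?j i) = (\<Sum>i=2..m. j i) + t"
    using m by (simp add: sum.cong[of "{2..m}" _ ?j j])
  have "k 1 + ((\<Sum>i=2..m. j i) + t) - k (Suc m) = N - (k (Suc m) - t)"
    using t le_k1 unfolding N_def by simp
  then have "?T ?j (Suc m) = real (k (Suc m) choose t) * (fact N / fact (N - (k (Suc m) - t)))"
    unfolding sum_before sum_upto N_def by simp
  also have "\<dots> = real (k (Suc m) choose t) * real (falling_fact N (k (Suc m) - t))"
  proof -
    have "k (Suc m) - t \<le> N" using le_k1 by (simp add: N_def)
    from fact_eq_fact_diff_mult_falling_fact[OF this, where 'a = real]
    have "(fact N :: real) / fact (N - (k (Suc m) - t)) = real (falling_fact N (k (Suc m) - t))"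
      by simp
    then show ?thesis by simp
  qed
  finally have new_factor: "?T ?j (Suc m) = \<dots>" .
  have "Acoef (Suc m) k ?j = (\<Prod>l=2..m. ?T ?j l) * ?T ?j (Suc m)"
    unfolding Acoef_def using m by simp
  then show ?thesis
    unfolding old_factors new_factor by (simp add: Acoef_def N_def)
qed

lemma sum_Acoef_weighted:
  fixes h :: "nat \<Rightarrow> real"
  assumes "1 \<le> m" and "\<forall>l\<in>{1..m}. k l \<le> k 1"
  shows "(\<Sum>j\<in>(\<Pi>\<^sub>E l\<in>{2..m}. {0..k l}). Acoef m k j * h (k 1 + (\<Sum>i=2..m. j i))) =
    (\<Sum>\<sigma>\<in>PiK m k. h (card \<sigma>))"
  using assms
proof (induction m arbitrary: h rule: nat_induct_at_least)
  case base
  then show ?case using sum_PiK_1[where k = k and h = h] by (simp add: Acoef_def)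
next
  case (Suc m)
  let ?b = "k (Suc m)" and ?N = "\<lambda>j. k 1 + (\<Sum>i=2..m. j i)"
  define g where "g n = (\<Sum>t=0..?b. of_nat (?b choose t) * of_nat (falling_fact n (?b - t)) * h (n + t))" for n
  have le_k1: "\<forall>l\<in>{1..m}. k l \<le> k 1" "?b \<le> k 1" using Suc.prems by auto
  have "(\<Sum>j\<in>(\<Pi>\<^sub>E l\<in>{2..Suc m}. {0..k l}). Acoef (Suc m) k j * h (k 1 + (\<Sum>i=2..Suc m. j i)))
      = (\<Sum>j\<in>(\<Pi>\<^sub>E l\<in>{2..m}. {0..k l}). \<Sum>t=0..?b.
           Acoef (Suc m) k (j(Suc m := t)) * h (k 1 + (\<Sum>i=2..Suc m. (j(Suc m := t)) i)))"
    using Suc.hyps by (simp add: atLeastAtMostSuc_conv sum_PiE_insert)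
  also have "\<dots> = (\<Sum>j\<in>(\<Pi>\<^sub>E l\<in>{2..m}. {0..k l}). Acoef m k j * g (?N j))"
  proof (intro sum.cong refl)
    fix j :: "nat \<Rightarrow> nat"
    have "(\<Sum>i=2..Suc m. (j(Suc m := t)) i) = (\<Sum>i=2..m. j i) + t" for t
      using Suc.hyps by (simp add: sum.cong[of "{2..m}" _ "j(Suc m := t)" j])
    then show "(\<Sum>t=0..?b. Acoef (Suc m) k (j(Suc m := t)) * h (k 1 + (\<Sum>i=2..Suc m. (j(Suc m := t)) i)))
        = Acoef m k j * g (?N j)"
      unfolding g_def sum_distrib_left
      by (intro sum.cong refl) (simp add: Acoef_Suc[OF Suc.hyps _ le_k1(2)] add.assoc mult_ac)
  qed
  also have "\<dots> = (\<Sum>\<sigma>\<in>PiK m k. g (card \<sigma>))"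
    by (rule Suc.IH[OF le_k1(1)])
  also have "\<dots> = (\<Sum>\<tau>\<in>PiK (Suc m) k. h (card \<tau>))"
    unfolding g_def by (rule sum_PiK_Suc[symmetric])
  finally show ?case .
qed

theorem mainTheorem7:
  fixes m :: nat and k :: "nat \<Rightarrow> nat"
  assumes "1 \<le> m"
    and "\<forall>i l. 1 \<le> i \<and> i \<le> l \<and> l \<le> m \<longrightarrow> k l \<le> k i"
    and "1 \<le> k m"
  shows "(\<Sum>j\<in>(\<Pi>\<^sub>E l\<in>{2..m}. {0..k l}). Acoef m k j) = real (card (PiK m k))"
proof -
  have "\<forall>l\<in>{1..m}. k l \<le> k 1" using assms(2) by auto
  from sum_Acoef_weighted[OF assms(1) this, of "\<lambda>_. 1"] show ?thesis by simp
qed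

end
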